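(* Let $B$ be a finite one-generator skew brace, $x\in B$ with $B=B(x)$, and $C:=\langle x\rangle$ (the sub-q-cycle set of $B$ generated by $x$). Then the subgroup of $(B,\circ)$ generated by $C$ is $B$.
   Context: A skew brace is a triple $(B,+,\circ)$ where $(B,+)$ and $(B,\circ)$ are groups and $a\circ(b+c)=a\circ b-a+a\circ c$; $a^-$ is the inverse in $(B,\circ)$, $\lambda_a(b):=-a+a\circ b$, $\delta_a(b):=a\circ b-a$. $B(x)$ is the smallest subset containing $x$ that is a subgroup of both $(B,+)$ and $(B,\circ)$. $B$ is a q-cycle set via $a\cdot b:=\lambda_{a^-}(b)$, $a:b:=\delta_{a^-}(b)$, where a q-cycle set is a non-empty set with operations $\cdot,:$ such that each $y\mapsto x\cdot y$ is bijective and $(x\cdot y)\cdot(x\cdot z)=(y:x)\cdot(y\cdot z)$, $(x:y):(x:z)=(y\cdot x):(y:z)$, $(x\cdot y):(x\cdot z)=(y:x)\cdot(y:z)$. A sub-q-cycle set is a subset that is a q-cycle set under the restricted operations, and $\langle x\rangle$ is the smallest one containing $x$. *)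

theory Defs
  imports "HOL-Algebra.Generated_Groups"
begin

text \<open>A skew brace is given by two group structures A = (B,+) and M = (B,\<circ>)
 on the same carrier, satisfying the brace compatibility law
 a \<circ> (b + c) = a \<circ> b - a + a \<circ> c.\<close>

definition skew_brace :: "('a, 'm1) monoid_scheme \<Rightarrow> ('a, 'm2) monoid_scheme \<Rightarrow> bool" where
  "skew_brace A M \<longleftrightarrow> group A \<and> group M \<and> carrier A = carrier M \<and>
     (\<forall>a\<in>carrier A. \<forall>b\<in>carrier A. \<forall>c\<in>carrier A.
        a \<otimes>\<^bsub>M\<^esub> (b \<otimes>\<^bsub>A\<^esub> c)
          = (a \<otimes>\<^bsub>M\<^esub> b) \<otimes>\<^bsub>A\<^esub> inv\<^bsub>A\<^esub> a \<otimes>\<^bsub>A\<^esub> (a \<otimes>\<^bsub>M\<^esub> c))"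

definition brace_lambda :: "('a, 'm1) monoid_scheme \<Rightarrow> ('a, 'm2) monoid_scheme \<Rightarrow> 'a \<Rightarrow> 'a \<Rightarrow> 'a" where
  "brace_lambda A M a b = inv\<^bsub>A\<^esub> a \<otimes>\<^bsub>A\<^esub> (a \<otimes>\<^bsub>M\<^esub> b)"

definition brace_delta :: "('a, 'm1) monoid_scheme \<Rightarrow> ('a, 'm2) monoid_scheme \<Rightarrow> 'a \<Rightarrow> 'a \<Rightarrow> 'a" where
  "brace_delta A M a b = (a \<otimes>\<^bsub>M\<^esub> b) \<otimes>\<^bsub>A\<^esub> inv\<^bsub>A\<^esub> a"

definition qdot :: "('a, 'm1) monoid_scheme \<Rightarrow> ('a, 'm2) monoid_scheme \<Rightarrow> 'a \<Rightarrow> 'a \<Rightarrow> 'a" where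
  "qdot A M a b = brace_lambda A M (inv\<^bsub>M\<^esub> a) b"

definition qcolon :: "('a, 'm1) monoid_scheme \<Rightarrow> ('a, 'm2) monoid_scheme \<Rightarrow> 'a \<Rightarrow> 'a \<Rightarrow> 'a" where
  "qcolon A M a b = brace_delta A M (inv\<^bsub>M\<^esub> a) b"

definition brace_gen :: "('a, 'm1) monoid_scheme \<Rightarrow> ('a, 'm2) monoid_scheme \<Rightarrow> 'a \<Rightarrow> 'a set" where
  "brace_gen A M x = \<Inter>{S. x \<in> S \<and> subgroup S A \<and> subgroup S M}"

definition sub_qcycle_set :: "('a, 'm1) monoid_scheme \<Rightarrow> ('a, 'm2) monoid_scheme \<Rightarrow> 'a set \<Rightarrow> bool" where
  "sub_qcycle_set A M S \<longleftrightarrow> S \<subseteq> carrier A \<and> S \<noteq> {} \<and>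
     (\<forall>a\<in>S. \<forall>b\<in>S. qdot A M a b \<in> S \<and> qcolon A M a b \<in> S) \<and>
     (\<forall>a\<in>S. bij_betw (qdot A M a) S S) \<and>
     (\<forall>x\<in>S. \<forall>y\<in>S. \<forall>z\<in>S.
        qdot A M (qdot A M x y) (qdot A M x z) = qdot A M (qcolon A M y x) (qdot A M y z) \<and>
        qcolon A M (qcolon A M x y) (qcolon A M x z) = qcolon A M (qdot A M y x) (qcolon A M y z) \<and>
        qcolon A M (qdot A M x y) (qdot A M x z) = qdot A M (qcolon A M y x) (qcolon A M y z))"

definition qcs_gen :: "('a, 'm1) monoid_scheme \<Rightarrow> ('a, 'm2) monoid_scheme \<Rightarrow> 'a \<Rightarrow> 'a set" where
  "qcs_gen A M x = \<Inter>{S. x \<in> S \<and> sub_qcycle_set A M S}"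

end

theory Submission
  imports Defs
begin

(* Let C = <x>, and let G and K be the subgroups of (B,\<circ>) and of (B,+) generated by C.
   Only two facts are used: C is closed under a\<cdot>b = \<lambda>_{a^-}(b), and B is finite.
   Each \<lambda>_{c^-} with c \<in> C maps the finite set C injectively into itself, so every \<lambda>_g
   with g \<in> G permutes C. Hence g + c = g \<circ> \<lambda>_{g^-}(c) \<in> G for g \<in> G and c \<in> C; thus
   right translation by elements of K preserves G, and K \<subseteq> G. Conversely c^- = -(c\<cdot>c) and
   c^- \<circ> k = c^- + \<lambda>_{c^-}(k), so left \<circ>-translation by elements of G preserves K, and
   G \<subseteq> K. So G = K is a subgroup of both groups containing x, hence contains B(x) = B. *)

lemma (in group) generate_stabilizes_finite_set:
  fixes \<phi> :: "'a \<Rightarrow> 'c \<Rightarrow> 'c"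
  assumes act: "\<And>g h s. g \<in> carrier G \<Longrightarrow> h \<in> carrier G \<Longrightarrow> s \<in> S \<Longrightarrow>
      \<phi> (g \<otimes> h) s = \<phi> g (\<phi> h s)"
    and act_one: "\<And>s. s \<in> S \<Longrightarrow> \<phi> \<one> s = s"
    and "finite S" and gens: "gens \<subseteq> carrier G"
    and stable: "\<And>c. c \<in> gens \<Longrightarrow> \<phi> (inv c) ` S \<subseteq> S"
    and "a \<in> generate G gens"
  shows "\<phi> a ` S = S"
proof -
  have act_image: "\<phi> (g \<otimes> h) ` S = \<phi> g ` \<phi> h ` S"
    if "g \<in> carrier G" "h \<in> carrier G" for g h
    using that act by (auto simp: image_image)
  have inv_gen: "\<phi> (inv c) ` S = S" if c: "c \<in> gens" for c
  proof (rule endo_inj_surj)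
    have "\<phi> c (\<phi> (inv c) s) = s" if "s \<in> S" for s
      using that c gens act act_one by (metis r_inv inv_closed subsetD)
    then show "inj_on (\<phi> (inv c)) S"
      by (rule inj_on_inverseI)
  qed (use \<open>finite S\<close> stable c in auto)
  from \<open>a \<in> generate G gens\<close> show ?thesis
  proof (induction rule: generate.induct)
    case one
    then show ?case using act_one by simp
  next
    case (incl c)
    then have "\<phi> c ` S = \<phi> c ` \<phi> (inv c) ` S"
      using inv_gen by simp
    also have "\<dots> = \<phi> \<one> ` S"
      using act_image[of c "inv c"] incl gens by (simp add: subsetD)
    finally show ?case
      using incl gens act_one by auto
  next
    case (inv c)
    then show ?case using inv_gen by simp
  next
    case (eng g h)
    then show ?case using gens act_image generate_in_carrier by simp
  qed
qed

lemma (in group) inv_mult_cancel_left [simp]: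
  "a \<in> carrier G \<Longrightarrow> b \<in> carrier G \<Longrightarrow> inv a \<otimes> (a \<otimes> b) = b"
  "a \<in> carrier G \<Longrightarrow> b \<in> carrier G \<Longrightarrow> a \<otimes> (inv a \<otimes> b) = b"
  by (simp_all add: m_assoc [symmetric])

locale skew_brace_struct =
  fixes A :: "('a, 'm1) monoid_scheme" and M :: "('a, 'm2) monoid_scheme"
  assumes skew_brace: "skew_brace A M"
begin

sublocale A: group A using skew_brace by (simp add: skew_brace_def)
sublocale M: group M using skew_brace by (simp add: skew_brace_def)

lemma carrier_M [simp]: "carrier M = carrier A"
  using skew_brace by (simp add: skew_brace_def)

lemma M_closed [simp]:
  "a \<in> carrier A \<Longrightarrow> b \<in> carrier A \<Longrightarrow> a \<otimes>\<^bsub>M\<^esub> b \<in> carrier A"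
  "a \<in> carrier A \<Longrightarrow> inv\<^bsub>M\<^esub> a \<in> carrier A"
  "\<one>\<^bsub>M\<^esub> \<in> carrier A"
  using M.m_closed M.inv_closed M.one_closed by simp_all

lemma brace_law:
  assumes "a \<in> carrier A" "b \<in> carrier A" "c \<in> carrier A"
  shows "a \<otimes>\<^bsub>M\<^esub> (b \<otimes>\<^bsub>A\<^esub> c) = (a \<otimes>\<^bsub>M\<^esub> b) \<otimes>\<^bsub>A\<^esub> (inv\<^bsub>A\<^esub> a \<otimes>\<^bsub>A\<^esub> (a \<otimes>\<^bsub>M\<^esub> c))"
  using skew_brace assms by (simp add: skew_brace_def A.m_assoc)

lemma one_M_eq [simp]: "\<one>\<^bsub>M\<^esub> = \<one>\<^bsub>A\<^esub>"
proof -
  have "\<one>\<^bsub>A\<^esub> = \<one>\<^bsub>M\<^esub> \<otimes>\<^bsub>M\<^esub> (\<one>\<^bsub>A\<^esub> \<otimes>\<^bsub>A\<^esub> \<one>\<^bsub>A\<^esub>)"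
    by simp
  also have "\<dots> = \<one>\<^bsub>A\<^esub> \<otimes>\<^bsub>A\<^esub> (inv\<^bsub>A\<^esub> \<one>\<^bsub>M\<^esub> \<otimes>\<^bsub>A\<^esub> \<one>\<^bsub>A\<^esub>)"
    using brace_law[of "\<one>\<^bsub>M\<^esub>" "\<one>\<^bsub>A\<^esub>" "\<one>\<^bsub>A\<^esub>"] by simp
  finally have "inv\<^bsub>A\<^esub> \<one>\<^bsub>M\<^esub> = \<one>\<^bsub>A\<^esub>"
    using M.one_closed by simp
  then show ?thesis
    using M.one_closed by (metis A.inv_inv A.inv_one carrier_M)
qed

lemma M_one_simps [simp]:
  "b \<in> carrier A \<Longrightarrow> \<one>\<^bsub>A\<^esub> \<otimes>\<^bsub>M\<^esub> b = b"
  "b \<in> carrier A \<Longrightarrow> b \<otimes>\<^bsub>M\<^esub> \<one>\<^bsub>A\<^esub> = b"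
  "inv\<^bsub>M\<^esub> \<one>\<^bsub>A\<^esub> = \<one>\<^bsub>A\<^esub>"
  using M.l_one M.r_one M.inv_one by simp_all

abbreviation lam where "lam \<equiv> brace_lambda A M"
abbreviation del where "del \<equiv> brace_delta A M"
abbreviation qd where "qd \<equiv> qdot A M"
abbreviation qc where "qc \<equiv> qcolon A M"

lemma lam_closed [simp]: "a \<in> carrier A \<Longrightarrow> b \<in> carrier A \<Longrightarrow> lam a b \<in> carrier A"
  by (simp add: brace_lambda_def)

lemma qdot_closed [simp]: "a \<in> carrier A \<Longrightarrow> b \<in> carrier A \<Longrightarrow> qd a b \<in> carrier A"
  by (simp add: qdot_def)

lemma qcolon_closed [simp]: "a \<in> carrier A \<Longrightarrow> b \<in> carrier A \<Longrightarrow> qc a b \<in> carrier A"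
  by (simp add: qcolon_def brace_delta_def)

lemma mult_eq_add_lam:
  "a \<in> carrier A \<Longrightarrow> b \<in> carrier A \<Longrightarrow> a \<otimes>\<^bsub>M\<^esub> b = a \<otimes>\<^bsub>A\<^esub> lam a b"
  by (simp add: brace_lambda_def A.m_assoc [symmetric])

lemma lam_add:
  assumes "a \<in> carrier A" "b \<in> carrier A" "c \<in> carrier A"
  shows "lam a (b \<otimes>\<^bsub>A\<^esub> c) = lam a b \<otimes>\<^bsub>A\<^esub> lam a c"
  using assms by (simp add: brace_lambda_def brace_law A.m_assoc)

lemma lam_hom: "a \<in> carrier A \<Longrightarrow> lam a \<in> hom A A"
  by (rule homI) (simp_all add: lam_add)

lemma lam_inv_add:
  "a \<in> carrier A \<Longrightarrow> b \<in> carrier A \<Longrightarrow> lam a (inv\<^bsub>A\<^esub> b) = inv\<^bsub>A\<^esub> (lam a b)"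
  using group_hom.hom_inv[of A A "lam a"] lam_hom by (simp add: group_hom_def group_hom_axioms_def)

lemma lam_mult:
  assumes "a \<in> carrier A" "b \<in> carrier A" "c \<in> carrier A"
  shows "lam (a \<otimes>\<^bsub>M\<^esub> b) c = lam a (lam b c)"
proof -
  have "a \<otimes>\<^bsub>M\<^esub> b \<otimes>\<^bsub>M\<^esub> c = a \<otimes>\<^bsub>M\<^esub> (b \<otimes>\<^bsub>A\<^esub> lam b c)"
    using assms by (simp add: M.m_assoc mult_eq_add_lam [of b c])
  also have "\<dots> = (a \<otimes>\<^bsub>M\<^esub> b) \<otimes>\<^bsub>A\<^esub> lam a (lam b c)"
    using assms brace_law [of a b "lam b c"] by (simp add: brace_lambda_def [of A M a])
  finally show ?thesis
    using assms by (simp add: brace_lambda_def [of A M "a \<otimes>\<^bsub>M\<^esub> b"])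
qed

lemma lam_one [simp]: "b \<in> carrier A \<Longrightarrow> lam \<one>\<^bsub>A\<^esub> b = b"
  by (simp add: brace_lambda_def)

lemma lam_lam_inv: "a \<in> carrier A \<Longrightarrow> b \<in> carrier A \<Longrightarrow> lam a (lam (inv\<^bsub>M\<^esub> a) b) = b"
  by (simp add: lam_mult [symmetric])

lemma lam_inv_lam: "a \<in> carrier A \<Longrightarrow> b \<in> carrier A \<Longrightarrow> lam (inv\<^bsub>M\<^esub> a) (lam a b) = b"
  by (simp add: lam_mult [symmetric])

lemma lam_inv_self: "a \<in> carrier A \<Longrightarrow> lam a (inv\<^bsub>M\<^esub> a) = inv\<^bsub>A\<^esub> a"
  by (simp add: brace_lambda_def)

lemma add_eq_mult_lam:
  "a \<in> carrier A \<Longrightarrow> b \<in> carrier A \<Longrightarrow> a \<otimes>\<^bsub>A\<^esub> b = a \<otimes>\<^bsub>M\<^esub> lam (inv\<^bsub>M\<^esub> a) b"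
  by (simp add: mult_eq_add_lam lam_lam_inv)

lemma qdot_self: "a \<in> carrier A \<Longrightarrow> qd a a = inv\<^bsub>A\<^esub> (inv\<^bsub>M\<^esub> a)"
  by (simp add: qdot_def brace_lambda_def)

lemma mult_inv_add:
  "a \<in> carrier A \<Longrightarrow> b \<in> carrier A \<Longrightarrow>
    a \<otimes>\<^bsub>M\<^esub> inv\<^bsub>A\<^esub> b = a \<otimes>\<^bsub>A\<^esub> inv\<^bsub>A\<^esub> (a \<otimes>\<^bsub>M\<^esub> b) \<otimes>\<^bsub>A\<^esub> a"
  by (simp add: mult_eq_add_lam lam_inv_add A.inv_mult_group A.m_assoc)

lemma del_eq_conj:
  "a \<in> carrier A \<Longrightarrow> b \<in> carrier A \<Longrightarrow> del a b = a \<otimes>\<^bsub>A\<^esub> lam a b \<otimes>\<^bsub>A\<^esub> inv\<^bsub>A\<^esub> a"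
  by (simp add: brace_delta_def mult_eq_add_lam)

lemma del_mult:
  assumes "a \<in> carrier A" "b \<in> carrier A" "c \<in> carrier A"
  shows "del (a \<otimes>\<^bsub>M\<^esub> b) c = del a (del b c)"
  using assms
  by (simp add: brace_delta_def brace_law mult_inv_add A.m_assoc A.inv_mult_group M.m_assoc)

lemma mult_qdot: "a \<in> carrier A \<Longrightarrow> b \<in> carrier A \<Longrightarrow> a \<otimes>\<^bsub>M\<^esub> qd a b = a \<otimes>\<^bsub>A\<^esub> b"
  by (simp add: qdot_def mult_eq_add_lam lam_lam_inv)

lemma mult_qcolon: "a \<in> carrier A \<Longrightarrow> b \<in> carrier A \<Longrightarrow> a \<otimes>\<^bsub>M\<^esub> qc a b = b \<otimes>\<^bsub>A\<^esub> a"
  by (simp add: qcolon_def brace_delta_def brace_law mult_inv_add A.m_assoc M.m_assoc [symmetric])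

lemma qdot_qdot:
  "a \<in> carrier A \<Longrightarrow> b \<in> carrier A \<Longrightarrow> c \<in> carrier A \<Longrightarrow>
    qd a (qd b c) = lam (inv\<^bsub>M\<^esub> (b \<otimes>\<^bsub>M\<^esub> a)) c"
  by (simp add: qdot_def lam_mult M.inv_mult_group)

lemma qcolon_qcolon:
  "a \<in> carrier A \<Longrightarrow> b \<in> carrier A \<Longrightarrow> c \<in> carrier A \<Longrightarrow>
    qc a (qc b c) = del (inv\<^bsub>M\<^esub> (b \<otimes>\<^bsub>M\<^esub> a)) c"
  by (simp add: qcolon_def del_mult M.inv_mult_group)

lemma qcycle_law_qdot_qdot:
  "x \<in> carrier A \<Longrightarrow> y \<in> carrier A \<Longrightarrow> z \<in> carrier A \<Longrightarrow>
    qd (qd x y) (qd x z) = qd (qc y x) (qd y z)"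
  by (simp add: qdot_qdot mult_qdot mult_qcolon)

lemma qcycle_law_qcolon_qcolon:
  "x \<in> carrier A \<Longrightarrow> y \<in> carrier A \<Longrightarrow> z \<in> carrier A \<Longrightarrow>
    qc (qc x y) (qc x z) = qc (qd y x) (qc y z)"
  by (simp add: qcolon_qcolon mult_qdot mult_qcolon)

lemma qcycle_law_qdot_qcolon:
  assumes x: "x \<in> carrier A" and y: "y \<in> carrier A" and z: "z \<in> carrier A"
  shows "qc (qd x y) (qd x z) = qd (qc y x) (qc y z)"
proof -
  (* Both sides are (B,+)-conjugates of lam w z, by u^- and by lam v^- y^- respectively,
     and these two elements coincide. *)
  define u v w where "u = qd x y" and "v = qc y x" and "w = inv\<^bsub>M\<^esub> (x \<otimes>\<^bsub>A\<^esub> y)"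
  have u: "u \<in> carrier A" and v: "v \<in> carrier A" and w: "w \<in> carrier A"
    using x y by (simp_all add: u_def v_def w_def)
  have w_u: "w = inv\<^bsub>M\<^esub> u \<otimes>\<^bsub>M\<^esub> inv\<^bsub>M\<^esub> x"
    using x y by (simp add: u_def w_def mult_qdot [symmetric] M.inv_mult_group)
  have w_v: "w = inv\<^bsub>M\<^esub> v \<otimes>\<^bsub>M\<^esub> inv\<^bsub>M\<^esub> y"
    using x y by (simp add: v_def w_def mult_qcolon [symmetric] M.inv_mult_group)
  have "lam w y = inv\<^bsub>A\<^esub> (inv\<^bsub>M\<^esub> u)"
    using x y u by (simp add: w_u lam_mult u_def [symmetric] qdot_def [symmetric] qdot_self)
  moreover have "inv\<^bsub>M\<^esub> v = w \<otimes>\<^bsub>M\<^esub> y"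
    using v y by (simp add: w_v M.m_assoc)
  ultimately have conj: "lam (inv\<^bsub>M\<^esub> v) (inv\<^bsub>M\<^esub> y) = inv\<^bsub>M\<^esub> u"
    using u w y by (simp add: lam_mult lam_inv_self lam_inv_add)
  have "qc u (qd x z) = inv\<^bsub>M\<^esub> u \<otimes>\<^bsub>A\<^esub> lam w z \<otimes>\<^bsub>A\<^esub> inv\<^bsub>A\<^esub> (inv\<^bsub>M\<^esub> u)"
    using u x z by (simp add: qcolon_def qdot_def del_eq_conj w_u lam_mult)
  moreover have "qd v (qc y z) = lam (inv\<^bsub>M\<^esub> v) (inv\<^bsub>M\<^esub> y) \<otimes>\<^bsub>A\<^esub> lam w z \<otimes>\<^bsub>A\<^esub>
      inv\<^bsub>A\<^esub> (lam (inv\<^bsub>M\<^esub> v) (inv\<^bsub>M\<^esub> y))"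
    using v y z by (simp add: qcolon_def qdot_def del_eq_conj w_v lam_mult lam_add lam_inv_add)
  ultimately show ?thesis
    unfolding u_def [symmetric] v_def [symmetric] by (simp add: conj)
qed

lemma carrier_sub_qcycle_set: "sub_qcycle_set A M (carrier A)"
  unfolding sub_qcycle_set_def
proof (intro conjI ballI)
  fix a assume "a \<in> carrier A"
  then show "bij_betw (qd a) (carrier A) (carrier A)"
    by (intro bij_betw_byWitness [where f' = "lam a"]) (auto simp: qdot_def lam_lam_inv lam_inv_lam)
qed (auto simp: qcycle_law_qdot_qdot qcycle_law_qcolon_qcolon qcycle_law_qdot_qcolon)

lemma qcs_gen_subset: "x \<in> carrier A \<Longrightarrow> qcs_gen A M x \<subseteq> carrier A"
  unfolding qcs_gen_def using carrier_sub_qcycle_set by (intro Inter_lower) simp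

lemma mem_qcs_gen: "x \<in> qcs_gen A M x"
  by (simp add: qcs_gen_def)

lemma qdot_mem_qcs_gen:
  "a \<in> qcs_gen A M x \<Longrightarrow> b \<in> qcs_gen A M x \<Longrightarrow> qd a b \<in> qcs_gen A M x"
  by (auto simp: qcs_gen_def sub_qcycle_set_def)

lemma lam_image_generate_subset:
  assumes "a \<in> carrier A" "S \<subseteq> carrier A" "lam a ` S \<subseteq> S"
  shows "lam a ` generate A S \<subseteq> generate A S"
proof -
  interpret lam: group_hom A A "lam a"
    using assms(1) lam_hom by (simp add: group_hom_def group_hom_axioms_def)
  show ?thesis
    using lam.generate_img [OF assms(2)] A.mono_generate [OF assms(3)] by simp
qed

context
  fixes C :: "'a set"
  assumes finite_carrier: "finite (carrier A)" and C: "C \<subseteq> carrier A"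
    and qdot_closed: "\<And>a b. a \<in> C \<Longrightarrow> b \<in> C \<Longrightarrow> qd a b \<in> C"
begin

lemma generate_subset_carrier: "generate M C \<subseteq> carrier A" "generate A C \<subseteq> carrier A"
  using C M.generate_incl A.generate_incl by simp_all

lemma subgroup_generate: "subgroup (generate M C) M" "subgroup (generate A C) A"
  using C M.generate_is_subgroup A.generate_is_subgroup by simp_all

lemma lam_image_eq_if_mem_generate_mult:
  assumes "g \<in> generate M C"
  shows "lam g ` C = C"
proof (rule M.generate_stabilizes_finite_set [where \<phi> = lam and gens = C])
  show "lam (inv\<^bsub>M\<^esub> c) ` C \<subseteq> C" if "c \<in> C" for c
    using that qdot_closed by (auto simp: qdot_def)
qed (use assms C finite_carrier in \<open>auto intro: finite_subset simp: lam_mult subsetD\<close>)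

lemma mult_mem_generate_add:
  assumes "g \<in> generate M C" and "k \<in> generate A C"
  shows "g \<otimes>\<^bsub>M\<^esub> k \<in> generate A C"
proof -
  let ?K = "generate A C"
  have "(\<otimes>\<^bsub>M\<^esub>) g ` ?K = ?K"
  proof (rule M.generate_stabilizes_finite_set [where \<phi> = "(\<otimes>\<^bsub>M\<^esub>)" and gens = C])
    fix c assume c: "c \<in> C"
    then have c_car: "c \<in> carrier A"
      using C by auto
    have "qd c ` ?K \<subseteq> ?K"
      unfolding qdot_def
      by (rule lam_image_generate_subset) (use C c qdot_closed in \<open>auto simp: qdot_def\<close>)
    moreover have "inv\<^bsub>A\<^esub> (qd c c) \<in> ?K"
      using c subgroup_generate generate.incl [of _ C] qdot_closed
      by (blast intro: subgroup.m_inv_closed)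
    moreover have "inv\<^bsub>M\<^esub> c \<otimes>\<^bsub>M\<^esub> k = inv\<^bsub>A\<^esub> (qd c c) \<otimes>\<^bsub>A\<^esub> qd c k" if "k \<in> ?K" for k
      using c_car that generate_subset_carrier
      by (simp add: subsetD mult_eq_add_lam qdot_self qdot_def [of A M c k])
    ultimately show "(\<otimes>\<^bsub>M\<^esub>) (inv\<^bsub>M\<^esub> c) ` ?K \<subseteq> ?K"
      using subgroup_generate by (auto intro: subgroup.m_closed)
  qed (use assms C generate_subset_carrier finite_carrier in
      \<open>auto intro: finite_subset simp: M.m_assoc subsetD\<close>)
  then show ?thesis
    using assms(2) by blast
qed

lemma add_mem_generate_mult:
  assumes "g \<in> generate M C" and "k \<in> generate A C"
  shows "g \<otimes>\<^bsub>A\<^esub> k \<in> generate M C"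
proof -
  let ?G = "generate M C"
  have inv_k: "inv\<^bsub>A\<^esub> k \<in> generate A C"
    using subgroup_generate(2) assms(2) by (rule subgroup.m_inv_closed)
  have "(\<lambda>s. s \<otimes>\<^bsub>A\<^esub> inv\<^bsub>A\<^esub> (inv\<^bsub>A\<^esub> k)) ` ?G = ?G"
  proof (rule A.generate_stabilizes_finite_set [where \<phi> = "\<lambda>k s. s \<otimes>\<^bsub>A\<^esub> inv\<^bsub>A\<^esub> k" and gens = C])
    fix c assume c: "c \<in> C"
    have "g \<otimes>\<^bsub>M\<^esub> lam (inv\<^bsub>M\<^esub> g) c \<in> ?G" if g: "g \<in> ?G" for g
    proof -
      have "lam (inv\<^bsub>M\<^esub> g) c \<in> ?G"
        using lam_image_eq_if_mem_generate_mult g c subgroup_generate generate.incl [of _ C]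
        by (blast intro: subgroup.m_inv_closed)
      then show ?thesis
        using g subgroup_generate by (blast intro: subgroup.m_closed)
    qed
    then show "(\<lambda>s. s \<otimes>\<^bsub>A\<^esub> inv\<^bsub>A\<^esub> (inv\<^bsub>A\<^esub> c)) ` ?G \<subseteq> ?G"
      using c C generate_subset_carrier by (auto simp: add_eq_mult_lam subsetD)
  qed (use inv_k C generate_subset_carrier finite_carrier in
      \<open>auto intro: finite_subset simp: A.m_assoc A.inv_mult_group subsetD\<close>)
  then show ?thesis
    using assms generate_subset_carrier by (auto simp: subsetD)
qed

lemma generate_mult_eq_generate_add: "generate M C = generate A C"
proof
  show "generate M C \<subseteq> generate A C"
  proof
    fix g assume "g \<in> generate M C"
    then show "g \<in> generate A C"
      using mult_mem_generate_add [OF _ generate.one] generate_subset_carrier by (force simp: subsetD)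
  qed
  show "generate A C \<subseteq> generate M C"
  proof
    fix k assume "k \<in> generate A C"
    then show "k \<in> generate M C"
      using add_mem_generate_mult [OF generate.one] generate_subset_carrier by (force simp: subsetD)
  qed
qed

end

end

theorem mainTheorem20:
  fixes A :: "('a, 'm1) monoid_scheme" and M :: "('a, 'm2) monoid_scheme" and x :: 'a
  assumes "skew_brace A M"
    and "finite (carrier A)"
    and "x \<in> carrier A"
    and "carrier A = brace_gen A M x"
  shows "generate M (qcs_gen A M x) = carrier M"
proof -
  interpret skew_brace_struct A M
    by (rule skew_brace_struct.intro) (rule assms(1))
  let ?C = "qcs_gen A M x"
  have C: "?C \<subseteq> carrier A"
    using assms(3) by (rule qcs_gen_subset)
  have eq: "generate M ?C = generate A ?C"
    using assms(2) C qdot_mem_qcs_gen by (rule generate_mult_eq_generate_add)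
  have "carrier M \<subseteq> generate M ?C"
    unfolding carrier_M assms(4)
  proof (unfold brace_gen_def, rule Inter_lower, safe)
    show "x \<in> generate M ?C" by (rule generate.incl [OF mem_qcs_gen])
    show "subgroup (generate M ?C) A"
      unfolding eq using C by (rule A.generate_is_subgroup)
    show "subgroup (generate M ?C) M"
      using C by (simp add: M.generate_is_subgroup)
  qed
  moreover have "generate M ?C \<subseteq> carrier M"
    using C M.generate_incl [of ?C] by simp
  ultimately show ?thesis by blast
qed

end
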